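(* Let $(a_j)_{j=0}^\infty$ be a sequence of complex numbers with $|a_j|=1$ for all $j \ge 0$, and for each $n=0,1,2,\ldots$ let $P_n(z)=\sum_{j=0}^n a_j z^j$. Then $(P_n)_{n=0}^\infty$ is not an ultraflat sequence of unimodular polynomials; that is, there is no sequence $(\varepsilon_n)$ of positive real numbers with $\varepsilon_n\to 0$ such that $$(1-\varepsilon_n)\sqrt{n+1} \le |P_n(e^{it})| \le (1+\varepsilon_n)\sqrt{n+1} \quad \text{for all } t\in\mathbb{R} \text{ and all } n\ge 0.$$
   Context: For $n\ge 0$, $\mathcal{K}_n$ denotes the set of polynomials $Q_n(z)=\sum_{k=0}^n a_k z^k$ with $a_k\in\mathbb{C}$, $|a_k|=1$ (complex unimodular polynomials of degree $n$). Given $\varepsilon>0$, a polynomial $P_n\in\mathcal{K}_n$ is $\varepsilon$-flat if $(1-\varepsilon)\sqrt{n+1}\le |P_n(e^{it})|\le (1+\varepsilon)\sqrt{n+1}$ for all real $t$. A sequence $(P_n)$ with $P_n\in\mathcal{K}_n$ is ultraflat if there is a sequence $(\varepsilon_n)$ of positive numbers converging to $0$ such that each $P_n$ is $\varepsilon_n$-flat. *)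

theory Defs
  imports Complex_Main
begin

definition upoly :: "(nat \<Rightarrow> complex) \<Rightarrow> nat \<Rightarrow> complex \<Rightarrow> complex" where
  "upoly a n z = (\<Sum>k\<le>n. a k * z ^ k)"

definition eps_flat :: "real \<Rightarrow> nat \<Rightarrow> (nat \<Rightarrow> complex) \<Rightarrow> bool" where
  "eps_flat \<epsilon> n a \<longleftrightarrow>
     (\<forall>t::real. (1 - \<epsilon>) * sqrt (real n + 1) \<le> cmod (upoly a n (exp (\<i> * of_real t)))
              \<and> cmod (upoly a n (exp (\<i> * of_real t))) \<le> (1 + \<epsilon>) * sqrt (real n + 1))"

definition ultraflat :: "(nat \<Rightarrow> nat \<Rightarrow> complex) \<Rightarrow> bool" where
  "ultraflat c \<longleftrightarrow>
     (\<exists>\<epsilon> :: nat \<Rightarrow> real. (\<forall>n. \<epsilon> n > 0) \<and> \<epsilon> \<longlonglongrightarrow> 0 \<and> (\<forall>n. eps_flat (\<epsilon> n) n (c n)))"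

end

(* Sample everything at the N = 2n + 1 roots of unity, where Parseval's identity is exact for
   polynomials of degree < N.  Let S_n = sum_{k<=n} P_k = (n+1) P_n - z P_n'.  If P_n is eps-flat,
   S_n conj(P_n) is nearly real and nonnegative on the circle: its real part is bounded below by
   Bernstein's inequality for z P_n (via the Fejer kernel), and its imaginary part is -1/2 times
   the derivative of |P_n(e^it)|^2, a trigonometric polynomial of degree n that deviates from n + 1
   by O(eps n), so it is small in l^2 by Bernstein's inequality.  Since the samples of S_n conj(P_n)
   sum to N (n+1)(n+2)/2, the l^1 mass of S_n is about N n^(3/2) / 2.  Pairing S_n with P_m, m <= n,
   gives exactly N sum_{j<=m} (n+1-j), while flatness of P_m bounds the pairing by sqrt(m+1) times
   that mass.  For m + 1 = 16K and n + 1 = 25K the exact value 272K^2 + 8K exceeds the bound,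
   which is about 250K^2. *)

theory Submission
  imports Defs "HOL-Library.Real_Mod"
begin

definition unity_root :: "nat \<Rightarrow> nat \<Rightarrow> complex" where
  "unity_root N k = cis (2 * pi * real k / real N)"

lemma norm_unity_root [simp]: "cmod (unity_root N k) = 1"
  by (simp add: unity_root_def)

lemma sum_unity_root_orthogonal:
  assumes p: "p < N" and q: "q < N"
  shows "(\<Sum>k<N. unity_root N k ^ p * cnj (unity_root N k) ^ q) = (if p = q then of_nat N else 0)"
proof -
  define x where "x = cis (2 * pi * (real p - real q) / real N)"
  have "unity_root N k ^ p * cnj (unity_root N k) ^ q = x ^ k" for k
    unfolding x_def unity_root_def DeMoivre cis_cnj cis_mult
    by (rule arg_cong[where f = cis]) (simp add: field_simps add_divide_distrib[symmetric])
  then have sum_eq: "(\<Sum>k<N. unity_root N k ^ p * cnj (unity_root N k) ^ q) = (\<Sum>k<N. x ^ k)"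
    by simp
  show ?thesis
  proof (cases "p = q")
    case True
    then show ?thesis unfolding sum_eq by (simp add: x_def)
  next
    case False
    have "x \<noteq> 1"
    proof
      assume "x = 1"
      then obtain r :: int where "2 * pi * (real p - real q) / real N = of_int r * (2 * pi)"
        by (auto simp: x_def cis_eq_1_iff)
      then have "2 * pi * (real p - real q) = 2 * pi * (of_int r * real N)"
        using p by (simp add: divide_eq_eq mult_ac)
      then have "real_of_int (int p - int q) = real_of_int (r * int N)"
        by simp
      then have "int p mod int N = int q mod int N"
        by (simp only: of_int_eq_iff mod_eq_dvd_iff) simp
      with p q False show False
        by (simp add: zmod_int)
    qed
    moreover have "x ^ N = 1"
      using p by (simp add: x_def DeMoivre)
    ultimately show ?thesis
      using False unfolding sum_eq by (simp add: sum_gp_strict)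
  qed
qed

lemma sum_unity_root_inner:
  assumes "finite A" "finite B" and f: "\<And>x. x \<in> A \<Longrightarrow> f x < N" and g: "\<And>y. y \<in> B \<Longrightarrow> g y < N"
  shows "(\<Sum>k<N. (\<Sum>x\<in>A. b x * unity_root N k ^ f x) * cnj (\<Sum>y\<in>B. c y * unity_root N k ^ g y))
       = of_nat N * (\<Sum>x\<in>A. \<Sum>y\<in>B. if f x = g y then b x * cnj (c y) else 0)"
proof -
  have "(\<Sum>k<N. (\<Sum>x\<in>A. b x * unity_root N k ^ f x) * cnj (\<Sum>y\<in>B. c y * unity_root N k ^ g y))
      = (\<Sum>k<N. \<Sum>x\<in>A. \<Sum>y\<in>B. b x * cnj (c y) * (unity_root N k ^ f x * cnj (unity_root N k) ^ g y))"
    by (simp add: cnj_sum sum_product mult_ac)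
  also have "\<dots> = (\<Sum>x\<in>A. \<Sum>y\<in>B. b x * cnj (c y) * (\<Sum>k<N. unity_root N k ^ f x * cnj (unity_root N k) ^ g y))"
    by (simp add: sum.swap[of _ "{..<N}"] sum_distrib_left)
  also have "\<dots> = (\<Sum>x\<in>A. \<Sum>y\<in>B. b x * cnj (c y) * (if f x = g y then of_nat N else 0))"
    using f g by (intro sum.cong refl) (simp add: sum_unity_root_orthogonal)
  also have "\<dots> = of_nat N * (\<Sum>x\<in>A. \<Sum>y\<in>B. if f x = g y then b x * cnj (c y) else 0)"
    by (simp add: sum_distrib_left if_distrib mult_ac cong: if_cong)
  finally show ?thesis .
qed

lemma discrete_parseval:
  assumes "D < N"
  shows "(\<Sum>k<N. (cmod (\<Sum>e\<le>D. b e * unity_root N k ^ e))\<^sup>2) = real N * (\<Sum>e\<le>D. (cmod (b e))\<^sup>2)"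
proof -
  have "complex_of_real (\<Sum>k<N. (cmod (\<Sum>e\<le>D. b e * unity_root N k ^ e))\<^sup>2)
      = (\<Sum>k<N. (\<Sum>e\<le>D. b e * unity_root N k ^ e) * cnj (\<Sum>e\<le>D. b e * unity_root N k ^ e))"
    by (simp only: of_real_sum complex_norm_square)
  also have "\<dots> = of_nat N * (\<Sum>e\<le>D. \<Sum>e'\<le>D. if e = e' then b e * cnj (b e') else 0)"
    using assms by (intro sum_unity_root_inner) auto
  also have "\<dots> = complex_of_real (real N * (\<Sum>e\<le>D. (cmod (b e))\<^sup>2))"
    by (simp add: sum.delta complex_norm_square del: of_real_power)
  finally show ?thesis
    by (simp only: of_real_eq_iff)
qed

lemma card_atMost_le_add:
  assumes "j \<le> n"
  shows "card {i. i \<le> n \<and> n \<le> j + i} = Suc j"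
proof -
  have "{i. i \<le> n \<and> n \<le> j + i} = {n - j..n}"
    using assms by (auto simp: atLeastAtMost_iff)
  then show ?thesis
    using assms by simp
qed

text \<open>With \<open>D = (\<Sum>i\<le>n. w ^ i)\<close>, the weight \<open>D * cnj (D * w ^ n) = \<bar>D\<bar>\<^sup>2 * w\<^sup>-\<^sup>n\<close> is a shifted
  Fejer kernel; convolving with it turns the coefficients \<open>c j\<close> into \<open>(j + 1) * c j\<close>.\<close>

lemma fejer_convolution:
  assumes "2 * n < N"
  shows "(\<Sum>k<N. upoly c n (z * unity_root N k) * (\<Sum>i\<le>n. unity_root N k ^ i)
                    * cnj ((\<Sum>i\<le>n. unity_root N k ^ i) * unity_root N k ^ n))
       = of_nat N * upoly (\<lambda>j. of_nat (Suc j) * c j) n z"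
proof -
  have pointwise: "upoly c n (z * w) * (\<Sum>i\<le>n. w ^ i) * cnj ((\<Sum>i\<le>n. w ^ i) * w ^ n)
      = (\<Sum>(j, i)\<in>{..n} \<times> {..n}. c j * z ^ j * w ^ (j + i)) * cnj (\<Sum>i'\<le>n. 1 * w ^ (i' + n))" for w
  proof -
    have "upoly c n (z * w) * (\<Sum>i\<le>n. w ^ i) = (\<Sum>(j, i)\<in>{..n} \<times> {..n}. c j * z ^ j * w ^ (j + i))"
      unfolding upoly_def sum_product sum.cartesian_product
      by (simp add: power_add power_mult_distrib mult_ac)
    moreover have "(\<Sum>i\<le>n. w ^ i) * w ^ n = (\<Sum>i'\<le>n. 1 * w ^ (i' + n))"
      by (simp add: sum_distrib_right power_add)
    ultimately show ?thesis
      by simp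
  qed
  have fibre: "(\<Sum>i'\<le>n. if j + i = i' + n then t else 0) = (if n \<le> j + i then t else 0)"
    if "j \<le> n" "i \<le> n" for j i and t :: complex
  proof -
    have "(\<Sum>i'\<le>n. if j + i = i' + n then t else 0)
        = (\<Sum>i'\<le>n. if i' = j + i - n \<and> n \<le> j + i then t else 0)"
      by (intro sum.cong refl) auto
    also have "\<dots> = (if n \<le> j + i then t else 0)"
      using that by (auto simp: sum.delta')
    finally show ?thesis .
  qed
  have "(\<Sum>k<N. upoly c n (z * unity_root N k) * (\<Sum>i\<le>n. unity_root N k ^ i)
                   * cnj ((\<Sum>i\<le>n. unity_root N k ^ i) * unity_root N k ^ n))
      = of_nat N * (\<Sum>(j, i)\<in>{..n} \<times> {..n}. \<Sum>i'\<le>n. if j + i = i' + n then c j * z ^ j else 0)"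
    unfolding pointwise case_prod_unfold using assms
    by (subst sum_unity_root_inner) (auto, simp only: complex_cnj_one mult_1_right)
  also have "\<dots> = of_nat N * (\<Sum>j\<le>n. \<Sum>i\<le>n. if n \<le> j + i then c j * z ^ j else 0)"
    by (simp add: sum.cartesian_product[symmetric] fibre)
  also have "\<dots> = of_nat N * (\<Sum>j\<le>n. of_nat (Suc j) * c j * z ^ j)"
    by (intro arg_cong[where f = "\<lambda>s. of_nat N * s"] sum.cong refl)
      (simp add: sum.inter_filter[symmetric] card_atMost_le_add)
  finally show ?thesis
    by (simp add: upoly_def)
qed

text \<open>Bernstein's inequality for \<open>z * P(z)\<close>, whose derivative has the coefficients \<open>(j + 1) * c j\<close>.\<close>

lemma norm_upoly_Suc_weighted_le:
  assumes bound: "\<And>w. cmod w = 1 \<Longrightarrow> cmod (upoly c n w) \<le> M" and z: "cmod z = 1"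
  shows "cmod (upoly (\<lambda>j. of_nat (Suc j) * c j) n z) \<le> real (n + 1) * M"
proof -
  define N where "N = 2 * n + 1"
  define D where "D k = (\<Sum>i\<le>n. unity_root N k ^ i)" for k
  have kernel_mass: "(\<Sum>k<N. (cmod (D k))\<^sup>2) = real N * real (n + 1)"
    using discrete_parseval[of n N "\<lambda>_. 1"] by (simp add: N_def D_def)
  have "real N * cmod (upoly (\<lambda>j. of_nat (Suc j) * c j) n z)
      = cmod (\<Sum>k<N. upoly c n (z * unity_root N k) * D k * cnj (D k * unity_root N k ^ n))"
    unfolding D_def by (subst fejer_convolution) (simp_all only: norm_mult norm_of_nat, simp add: N_def)
  also have "\<dots> \<le> (\<Sum>k<N. cmod (upoly c n (z * unity_root N k)) * (cmod (D k))\<^sup>2)"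
    by (rule order_trans[OF norm_sum]) (simp add: norm_mult norm_power power2_eq_square mult.assoc)
  also have "\<dots> \<le> (\<Sum>k<N. M * (cmod (D k))\<^sup>2)"
    by (intro sum_mono mult_right_mono bound) (simp_all add: norm_mult z)
  also have "\<dots> = real N * (real (n + 1) * M)"
    by (simp add: sum_distrib_left[symmetric] kernel_mass)
  finally show ?thesis
    by (simp add: N_def)
qed

definition zderiv :: "(nat \<Rightarrow> complex) \<Rightarrow> nat \<Rightarrow> complex \<Rightarrow> complex" where
  "zderiv a n z = (\<Sum>j\<le>n. of_nat j * a j * z ^ j)"

text \<open>\<open>autocorr a n e\<close> is the coefficient of \<open>w ^ (e - n)\<close> in \<open>\<bar>P(w)\<bar>\<^sup>2\<close> on the unit circle; the
  shift by \<open>n\<close> keeps the exponents natural.\<close>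

definition autocorr :: "(nat \<Rightarrow> complex) \<Rightarrow> nat \<Rightarrow> nat \<Rightarrow> complex" where
  "autocorr a n e = (\<Sum>j\<le>n. \<Sum>l\<le>n. if j + n = l + e then a j * cnj (a l) else 0)"

lemma sum_pairs_by_lag:
  fixes f :: "nat \<Rightarrow> nat \<Rightarrow> 'a::comm_semiring_0"
  shows "(\<Sum>e\<le>2 * n. (\<Sum>j\<le>n. \<Sum>l\<le>n. if j + n = l + e then f j l else 0) * F e)
       = (\<Sum>j\<le>n. \<Sum>l\<le>n. f j l * F (j + n - l))"
proof -
  have "(\<Sum>e\<le>2 * n. (\<Sum>j\<le>n. \<Sum>l\<le>n. if j + n = l + e then f j l else 0) * F e)
      = (\<Sum>j\<le>n. \<Sum>l\<le>n. \<Sum>e\<le>2 * n. if j + n = l + e then f j l * F e else 0)"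
    unfolding sum_distrib_right
    by (subst sum.swap, rule sum.cong[OF refl], subst sum.swap) (auto intro!: sum.cong)
  also have "\<dots> = (\<Sum>j\<le>n. \<Sum>l\<le>n. f j l * F (j + n - l))"
  proof (intro sum.cong refl)
    fix j l assume "j \<in> {..n}" "l \<in> {..n}"
    then have "(\<Sum>e\<le>2 * n. if j + n = l + e then f j l * F e else 0)
        = (\<Sum>e\<le>2 * n. if e = j + n - l then f j l * F (j + n - l) else 0)"
      by (intro sum.cong refl) auto
    also have "\<dots> = f j l * F (j + n - l)"
      using \<open>j \<in> {..n}\<close> \<open>l \<in> {..n}\<close> by (simp add: sum.delta'; linarith)
    finally show "(\<Sum>e\<le>2 * n. if j + n = l + e then f j l * F e else 0) = f j l * F (j + n - l)" .
  qed
  finally show ?thesis .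
qed

lemma power_mult_cnj_power_unit:
  assumes w: "cmod w = 1" and l: "l \<le> n"
  shows "w ^ n * (w ^ j * cnj w ^ l) = w ^ (j + n - l)"
proof -
  have "cnj w * w = 1"
    using complex_norm_square[of w] w by (simp add: mult.commute)
  have "w ^ n = w ^ (n - l) * w ^ l"
    using l by (simp flip: power_add)
  then have "w ^ n * (w ^ j * cnj w ^ l) = w ^ j * w ^ (n - l) * (cnj w * w) ^ l"
    by (simp add: power_mult_distrib mult_ac)
  also have "\<dots> = w ^ (j + n - l)"
    using \<open>cnj w * w = 1\<close> l by (simp flip: power_add)
  finally show ?thesis .
qed

lemma norm_upoly_sq_autocorr:
  assumes "cmod w = 1"
  shows "w ^ n * of_real ((cmod (upoly a n w))\<^sup>2) = (\<Sum>e\<le>2 * n. autocorr a n e * w ^ e)"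
proof -
  have expand: "of_real ((cmod (upoly a n w))\<^sup>2) = (\<Sum>j\<le>n. \<Sum>l\<le>n. a j * cnj (a l) * (w ^ j * cnj w ^ l))"
    unfolding complex_norm_square upoly_def cnj_sum sum_product
    by (simp add: mult_ac)
  have "w ^ n * of_real ((cmod (upoly a n w))\<^sup>2) = (\<Sum>j\<le>n. \<Sum>l\<le>n. a j * cnj (a l) * w ^ (j + n - l))"
    unfolding expand sum_distrib_left using assms
    by (intro sum.cong refl) (subst mult.left_commute, simp add: power_mult_cnj_power_unit)
  also have "\<dots> = (\<Sum>e\<le>2 * n. autocorr a n e * w ^ e)"
    unfolding autocorr_def by (rule sum_pairs_by_lag[symmetric])
  finally show ?thesis .
qed

text \<open>For \<open>w = exp (\<i> t)\<close>, \<open>2 * Im (cnj P * z P')\<close> is minus the \<open>t\<close>-derivative of \<open>\<bar>P\<bar>\<^sup>2\<close>,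
  which multiplies the coefficient of \<open>w ^ (e - n)\<close> by \<open>e - n\<close>.\<close>

lemma Im_cnj_upoly_zderiv_autocorr:
  assumes "cmod w = 1"
  shows "w ^ n * (2 * \<i> * Im (cnj (upoly a n w) * zderiv a n w))
       = (\<Sum>e\<le>2 * n. (of_nat e - of_nat n) * autocorr a n e * w ^ e)"
proof -
  have cross: "cnj (upoly a n w) * zderiv a n w = (\<Sum>j\<le>n. \<Sum>l\<le>n. a j * cnj (a l) * of_nat j * (w ^ j * cnj w ^ l))"
    unfolding upoly_def zderiv_def cnj_sum sum_product
    by (subst sum.swap) (simp add: mult_ac)
  have cross': "cnj (zderiv a n w) * upoly a n w = (\<Sum>j\<le>n. \<Sum>l\<le>n. a j * cnj (a l) * of_nat l * (w ^ j * cnj w ^ l))"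
    unfolding upoly_def zderiv_def cnj_sum sum_product
    by (subst sum.swap) (simp add: mult_ac)
  have "2 * \<i> * Im (cnj (upoly a n w) * zderiv a n w)
      = cnj (upoly a n w) * zderiv a n w - cnj (zderiv a n w) * upoly a n w"
    by (simp add: complex_eq_iff)
  also have "\<dots> = (\<Sum>j\<le>n. \<Sum>l\<le>n. a j * cnj (a l) * (of_nat j - of_nat l) * (w ^ j * cnj w ^ l))"
    unfolding cross cross' by (simp add: algebra_simps flip: sum_subtractf)
  finally have "w ^ n * (2 * \<i> * Im (cnj (upoly a n w) * zderiv a n w))
      = (\<Sum>j\<le>n. \<Sum>l\<le>n. w ^ n * (a j * cnj (a l) * (of_nat j - of_nat l) * (w ^ j * cnj w ^ l)))"
    by (simp add: sum_distrib_left)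
  also have "\<dots> = (\<Sum>j\<le>n. \<Sum>l\<le>n. a j * cnj (a l) * (of_nat j - of_nat l) * w ^ (j + n - l))"
    using assms by (intro sum.cong refl) (subst mult.left_commute, simp add: power_mult_cnj_power_unit)
  also have "\<dots> = (\<Sum>j\<le>n. \<Sum>l\<le>n. a j * cnj (a l) * ((of_nat (j + n - l) - of_nat n) * w ^ (j + n - l)))"
    by (intro sum.cong refl) (simp add: of_nat_diff)
  also have "\<dots> = (\<Sum>e\<le>2 * n. autocorr a n e * ((of_nat e - of_nat n) * w ^ e))"
    unfolding autocorr_def by (rule sum_pairs_by_lag[symmetric])
  also have "\<dots> = (\<Sum>e\<le>2 * n. (of_nat e - of_nat n) * autocorr a n e * w ^ e)"
    by (simp add: mult_ac)
  finally show ?thesis .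
qed

lemma bernstein_l2_unity_roots:
  assumes "2 * n < N"
  shows "(\<Sum>k<N. (cmod (\<Sum>e\<le>2 * n. (of_nat e - of_nat n) * h e * unity_root N k ^ e))\<^sup>2)
       \<le> (real n)\<^sup>2 * (\<Sum>k<N. (cmod (\<Sum>e\<le>2 * n. h e * unity_root N k ^ e))\<^sup>2)"
proof -
  have coeff_bound: "(cmod ((of_nat e - of_nat n) * h e))\<^sup>2 \<le> (real n)\<^sup>2 * (cmod (h e))\<^sup>2"
    if "e \<le> 2 * n" for e
  proof -
    have "cmod (of_nat e - of_nat n :: complex) = \<bar>real e - real n\<bar>"
      by (metis norm_of_real of_real_diff of_real_of_nat_eq)
    moreover have "(real e - real n)\<^sup>2 \<le> (real n)\<^sup>2"
      using that by (simp add: abs_le_square_iff[symmetric])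
    ultimately show ?thesis
      by (simp add: norm_mult power_mult_distrib mult_right_mono)
  qed
  have "(\<Sum>k<N. (cmod (\<Sum>e\<le>2 * n. (of_nat e - of_nat n) * h e * unity_root N k ^ e))\<^sup>2)
      = real N * (\<Sum>e\<le>2 * n. (cmod ((of_nat e - of_nat n) * h e))\<^sup>2)"
    using assms by (rule discrete_parseval)
  also have "\<dots> \<le> real N * ((real n)\<^sup>2 * (\<Sum>e\<le>2 * n. (cmod (h e))\<^sup>2))"
    unfolding sum_distrib_left by (intro mult_left_mono sum_mono coeff_bound) auto
  also have "\<dots> = (real n)\<^sup>2 * (\<Sum>k<N. (cmod (\<Sum>e\<le>2 * n. h e * unity_root N k ^ e))\<^sup>2)"
    using assms by (simp add: discrete_parseval)
  finally show ?thesis .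
qed

lemma sum_sq_Im_cnj_upoly_zderiv_le:
  assumes N: "2 * n < N"
    and g: "\<And>w. cmod w = 1 \<Longrightarrow> \<bar>(cmod (upoly a n w))\<^sup>2 - real (n + 1)\<bar> \<le> g"
  shows "(\<Sum>k<N. (2 * Im (cnj (upoly a n (unity_root N k)) * zderiv a n (unity_root N k)))\<^sup>2)
       \<le> (real n)\<^sup>2 * (real N * g\<^sup>2)"
proof -
  define h where "h e = autocorr a n e - (if e = n then of_nat (n + 1) else 0)" for e
  have shifted_sum: "(\<Sum>e\<le>2 * n. h e * w ^ e) = w ^ n * of_real ((cmod (upoly a n w))\<^sup>2 - real (n + 1))"
    if "cmod w = 1" for w
  proof -
    have "(\<Sum>e\<le>2 * n. (if e = n then of_nat (n + 1) else 0) * w ^ e)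
        = (\<Sum>e\<le>2 * n. if e = n then of_nat (n + 1) * w ^ n else 0)"
      by (intro sum.cong refl) auto
    also have "\<dots> = of_nat (n + 1) * w ^ n"
      by (simp add: sum.delta)
    finally show ?thesis
      unfolding h_def left_diff_distrib sum_subtractf norm_upoly_sq_autocorr[OF that, symmetric]
      by (simp add: algebra_simps)
  qed
  have shifted_weighted_sum: "(\<Sum>e\<le>2 * n. (of_nat e - of_nat n) * h e * w ^ e)
      = w ^ n * (2 * \<i> * Im (cnj (upoly a n w) * zderiv a n w))" if "cmod w = 1" for w
    unfolding Im_cnj_upoly_zderiv_autocorr[OF that]
    by (intro sum.cong refl) (simp add: h_def algebra_simps)
  have norm_shifted: "(2 * t)\<^sup>2 = (cmod (unity_root N k ^ n * (2 * \<i> * of_real t)))\<^sup>2" for k t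
    by (simp add: norm_mult norm_power power_mult_distrib)
  have "(\<Sum>k<N. (2 * Im (cnj (upoly a n (unity_root N k)) * zderiv a n (unity_root N k)))\<^sup>2)
      = (\<Sum>k<N. (cmod (\<Sum>e\<le>2 * n. (of_nat e - of_nat n) * h e * unity_root N k ^ e))\<^sup>2)"
    by (intro sum.cong refl) (simp only: norm_shifted shifted_weighted_sum[OF norm_unity_root])
  also have "\<dots> \<le> (real n)\<^sup>2 * (\<Sum>k<N. (cmod (\<Sum>e\<le>2 * n. h e * unity_root N k ^ e))\<^sup>2)"
    using N by (rule bernstein_l2_unity_roots)
  also have "\<dots> \<le> (real n)\<^sup>2 * (\<Sum>k<N. g\<^sup>2)"
  proof (intro mult_left_mono sum_mono power_mono)
    fix k
    show "cmod (\<Sum>e\<le>2 * n. h e * unity_root N k ^ e) \<le> g"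
      using g[OF norm_unity_root]
      by (simp only: shifted_sum[OF norm_unity_root] norm_mult norm_power norm_unity_root norm_of_real
          power_one mult_1_left)
  qed simp_all
  finally show ?thesis
    by simp
qed

text \<open>\<open>cesaro_sum a n z = (\<Sum>k\<le>n. upoly a k z)\<close>.\<close>

definition cesaro_sum :: "(nat \<Rightarrow> complex) \<Rightarrow> nat \<Rightarrow> complex \<Rightarrow> complex" where
  "cesaro_sum a n z = (\<Sum>j\<le>n. of_nat (n + 1 - j) * a j * z ^ j)"

lemma cesaro_sum_eq: "cesaro_sum a n z = of_nat (n + 1) * upoly a n z - zderiv a n z"
proof -
  have "cesaro_sum a n z = (\<Sum>j\<le>n. of_nat (n + 1) * (a j * z ^ j) - of_nat j * a j * z ^ j)"
    unfolding cesaro_sum_def by (intro sum.cong refl) (auto simp: of_nat_diff algebra_simps)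
  then show ?thesis
    unfolding upoly_def zderiv_def by (simp add: sum_subtractf sum_distrib_left)
qed

lemma cesaro_sum_eq_Suc_weighted:
  "cesaro_sum a n z = of_nat (n + 2) * upoly a n z - upoly (\<lambda>j. of_nat (Suc j) * a j) n z"
  unfolding cesaro_sum_eq upoly_def zderiv_def
  by (simp add: sum_distrib_left algebra_simps flip: sum.distrib sum_subtractf)

lemma sum_atMost_real_diff:
  assumes "m \<le> n"
  shows "(\<Sum>j\<le>m. real (n + 1 - j)) = real (m + 1) * real (n + 1) - real m * real (m + 1) / 2"
  using assms
proof (induction m)
  case (Suc m)
  then have "real (n + 1 - Suc m) = real n - real m"
    by (simp add: of_nat_diff)
  with Suc show ?case
    by (simp add: field_simps)
qed simp

lemma sum_cesaro_sum_mult_cnj_upoly: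
  assumes "m \<le> n" "n < N" and a: "\<And>j. cmod (a j) = 1"
  shows "(\<Sum>k<N. cesaro_sum a n (unity_root N k) * cnj (upoly a m (unity_root N k)))
       = of_nat N * of_real (\<Sum>j\<le>m. real (n + 1 - j))"
proof -
  have unit: "a j * cnj (a j) = 1" for j
    using complex_norm_square[of "a j"] a[of j] by simp
  have "(\<Sum>k<N. cesaro_sum a n (unity_root N k) * cnj (upoly a m (unity_root N k)))
      = of_nat N * (\<Sum>i\<le>n. \<Sum>j\<le>m. if i = j then of_nat (n + 1 - i) * a i * cnj (a j) else 0)"
    unfolding cesaro_sum_def upoly_def using assms(1,2)
    by (subst sum_unity_root_inner[where f = "\<lambda>i. i" and g = "\<lambda>j. j"]) auto
  also have "\<dots> = of_nat N * (\<Sum>j\<le>m. of_nat (n + 1 - j))"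
    using assms(1) by (subst sum.swap) (simp add: sum.delta mult.assoc unit)
  finally show ?thesis
    by simp
qed

lemma eps_flat_on_unit_circle:
  assumes "eps_flat \<epsilon> n a" and w: "cmod w = 1"
  shows "(1 - \<epsilon>) * sqrt (real n + 1) \<le> cmod (upoly a n w) \<and> cmod (upoly a n w) \<le> (1 + \<epsilon>) * sqrt (real n + 1)"
proof -
  have "w \<noteq> 0"
    using w by auto
  then have "exp (\<i> * of_real (Arg w)) = w"
    using Arg_correct[of w] w by (simp add: cis_conv_exp sgn_div_norm)
  then show ?thesis
    using assms(1) unfolding eps_flat_def by metis
qed

lemma abs_sq_diff_le_of_flat:
  fixes r s \<epsilon> :: real
  assumes "0 \<le> \<epsilon>" "\<epsilon> \<le> 1" "0 \<le> s" and lower: "(1 - \<epsilon>) * s \<le> r" and upper: "r \<le> (1 + \<epsilon>) * s"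
  shows "\<bar>r\<^sup>2 - s\<^sup>2\<bar> \<le> 3 * \<epsilon> * s\<^sup>2"
proof -
  have "0 \<le> (1 - \<epsilon>) * s"
    using assms by simp
  then have "((1 - \<epsilon>) * s)\<^sup>2 \<le> r\<^sup>2" and "r\<^sup>2 \<le> ((1 + \<epsilon>) * s)\<^sup>2"
    using lower upper by (auto intro: power_mono)
  moreover have "((1 - \<epsilon>) * s)\<^sup>2 = s\<^sup>2 - 2 * (\<epsilon> * s\<^sup>2) + \<epsilon>\<^sup>2 * s\<^sup>2"
    and "((1 + \<epsilon>) * s)\<^sup>2 = s\<^sup>2 + 2 * (\<epsilon> * s\<^sup>2) + \<epsilon>\<^sup>2 * s\<^sup>2"
    by (simp_all add: power2_eq_square algebra_simps)
  moreover have "\<epsilon>\<^sup>2 * s\<^sup>2 \<le> \<epsilon> * s\<^sup>2"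
    using assms by (intro mult_right_mono) (auto simp: power2_eq_square intro: mult_left_le_one_le)
  moreover have "0 \<le> \<epsilon>\<^sup>2 * s\<^sup>2"
    by simp
  ultimately show ?thesis
    by (simp only: abs_le_iff) linarith
qed

lemma Re_cesaro_sum_mult_cnj_ge:
  assumes flat: "\<And>w. cmod w = 1 \<Longrightarrow> L \<le> cmod (upoly a n w) \<and> cmod (upoly a n w) \<le> M"
    and "0 \<le> L" and z: "cmod z = 1"
  shows "real (n + 1) * M * (L - M) \<le> Re (cesaro_sum a n z * cnj (upoly a n z))"
proof -
  define R where "R = cmod (upoly a n z)"
  have "L \<le> R" "R \<le> M"
    using flat[OF z] by (auto simp: R_def)
  have "cmod (upoly (\<lambda>j. of_nat (Suc j) * a j) n z) \<le> real (n + 1) * M"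
    using flat z by (intro norm_upoly_Suc_weighted_le) auto
  then have "Re (upoly (\<lambda>j. of_nat (Suc j) * a j) n z * cnj (upoly a n z)) \<le> real (n + 1) * M * R"
    using complex_Re_le_cmod[of "upoly (\<lambda>j. of_nat (Suc j) * a j) n z * cnj (upoly a n z)"]
    by (simp add: norm_mult R_def mult_right_mono order_trans)
  moreover have "Re (cesaro_sum a n z * cnj (upoly a n z))
      = real (n + 2) * R\<^sup>2 - Re (upoly (\<lambda>j. of_nat (Suc j) * a j) n z * cnj (upoly a n z))"
    unfolding cesaro_sum_eq_Suc_weighted R_def
    by (simp add: left_diff_distrib mult.assoc complex_norm_square[symmetric] del: of_real_power)
  moreover have "real (n + 1) * M * (L - M) \<le> real (n + 2) * R\<^sup>2 - real (n + 1) * M * R"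
  proof -
    have "0 \<le> (M - R)\<^sup>2 + M * (R - L)"
      using \<open>L \<le> R\<close> \<open>R \<le> M\<close> \<open>0 \<le> L\<close> by simp
    then have "0 \<le> R\<^sup>2 + real (n + 1) * ((M - R)\<^sup>2 + M * (R - L))"
      by simp
    then show ?thesis
      by (simp add: power2_eq_square algebra_simps)
  qed
  ultimately show ?thesis
    by linarith
qed

lemma abs_le_sq_div_add:
  fixes t \<mu> :: real
  assumes "0 < \<mu>"
  shows "\<bar>t\<bar> \<le> (2 * t)\<^sup>2 / (4 * \<mu>) + \<mu> / 4"
proof -
  have "0 \<le> (2 * \<bar>t\<bar> - \<mu>)\<^sup>2"
    by simp
  then have "4 * \<mu> * \<bar>t\<bar> \<le> (2 * t)\<^sup>2 + \<mu>\<^sup>2"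
    by (simp add: power2_eq_square algebra_simps)
  then show ?thesis
    using assms by (simp add: field_simps power2_eq_square)
qed

lemma norm_cesaro_sum_mult_cnj_le:
  assumes flat: "eps_flat \<epsilon> n a" and "0 \<le> \<epsilon>" "\<epsilon> \<le> 1" "0 < \<mu>" and w: "cmod w = 1"
  shows "cmod (cesaro_sum a n w * cnj (upoly a n w))
       \<le> Re (cesaro_sum a n w * cnj (upoly a n w)) + 4 * \<epsilon> * (1 + \<epsilon>) * (real n + 1)\<^sup>2
         + (2 * Im (cnj (upoly a n w) * zderiv a n w))\<^sup>2 / (4 * \<mu>) + \<mu> / 4"
proof -
  define x where "x = cesaro_sum a n w * cnj (upoly a n w)"
  define y where "y = cnj (upoly a n w) * zderiv a n w"
  define s where "s = sqrt (real n + 1)"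
  have "real (n + 1) * ((1 + \<epsilon>) * s) * ((1 - \<epsilon>) * s - (1 + \<epsilon>) * s) \<le> Re x"
    unfolding x_def s_def using assms
    by (intro Re_cesaro_sum_mult_cnj_ge) (auto dest: eps_flat_on_unit_circle)
  moreover have "real (n + 1) * ((1 + \<epsilon>) * s) * ((1 - \<epsilon>) * s - (1 + \<epsilon>) * s)
      = - (2 * \<epsilon> * (1 + \<epsilon>) * (real n + 1)\<^sup>2)"
    by (simp add: s_def power2_eq_square algebra_simps)
  moreover have "0 \<le> 2 * \<epsilon> * (1 + \<epsilon>) * (real n + 1)\<^sup>2"
    using assms by simp
  ultimately have Re_bound: "\<bar>Re x\<bar> \<le> Re x + 4 * \<epsilon> * (1 + \<epsilon>) * (real n + 1)\<^sup>2"
    by linarith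
  have "Im x = - Im y"
    unfolding x_def y_def cesaro_sum_eq by (simp add: algebra_simps)
  then have "\<bar>Im x\<bar> \<le> (2 * Im y)\<^sup>2 / (4 * \<mu>) + \<mu> / 4"
    using abs_le_sq_div_add[OF \<open>0 < \<mu>\<close>, of "Im y"] by simp
  with Re_bound cmod_le[of x] show ?thesis
    unfolding x_def y_def by linarith
qed

lemma sum_norm_cesaro_sum_mult_cnj_le:
  assumes N: "N = 2 * n + 1" and a: "\<And>j. cmod (a j) = 1"
    and flat: "eps_flat \<epsilon> n a" and "0 < \<epsilon>" "\<epsilon> \<le> 1/4"
  shows "(\<Sum>k<N. cmod (cesaro_sum a n (unity_root N k) * cnj (upoly a n (unity_root N k))))
       \<le> real N * (real (n + 1) * real (n + 2) / 2 + 7 * \<epsilon> * (real n + 1)\<^sup>2)"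
proof -
  define x where "x k = cesaro_sum a n (unity_root N k) * cnj (upoly a n (unity_root N k))" for k
  define d where "d k = 2 * Im (cnj (upoly a n (unity_root N k)) * zderiv a n (unity_root N k))" for k
  define \<mu> where "\<mu> = 3 * \<epsilon> * (real n + 1)\<^sup>2"
  have "\<mu> > 0"
    using \<open>0 < \<epsilon>\<close> by (simp add: \<mu>_def)
  have sum_Re: "(\<Sum>k<N. Re (x k)) = real N * (real (n + 1) * real (n + 2) / 2)"
  proof -
    have gauss: "(\<Sum>j\<le>n. real (n + 1 - j)) = real (n + 1) * real (n + 2) / 2"
      by (subst sum_atMost_real_diff) (simp_all add: field_simps)
    have "(\<Sum>k<N. x k) = of_nat N * of_real (\<Sum>j\<le>n. real (n + 1 - j))"
      unfolding x_def using N a by (intro sum_cesaro_sum_mult_cnj_upoly) auto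
    then have "(\<Sum>k<N. x k) = of_nat N * of_real (real (n + 1) * real (n + 2) / 2)"
      unfolding gauss .
    then show ?thesis
      by (metis Re_complex_of_real Re_sum of_real_mult of_real_of_nat_eq)
  qed
  have "\<bar>(cmod (upoly a n w))\<^sup>2 - real (n + 1)\<bar> \<le> 3 * \<epsilon> * (real n + 1)" if "cmod w = 1" for w
    using abs_sq_diff_le_of_flat[of \<epsilon> "sqrt (real n + 1)" "cmod (upoly a n w)"]
      eps_flat_on_unit_circle[OF flat that] assms by simp
  then have sum_d: "(\<Sum>k<N. (d k)\<^sup>2) \<le> (real n)\<^sup>2 * (real N * (3 * \<epsilon> * (real n + 1))\<^sup>2)"
    unfolding d_def using N by (intro sum_sq_Im_cnj_upoly_zderiv_le) auto
  have "(\<Sum>k<N. cmod (x k))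
      \<le> (\<Sum>k<N. Re (x k) + 4 * \<epsilon> * (1 + \<epsilon>) * (real n + 1)\<^sup>2 + (d k)\<^sup>2 / (4 * \<mu>) + \<mu> / 4)"
    unfolding x_def d_def using assms \<open>\<mu> > 0\<close>
    by (intro sum_mono norm_cesaro_sum_mult_cnj_le) auto
  also have "\<dots> = real N * (real (n + 1) * real (n + 2) / 2 + 4 * \<epsilon> * (1 + \<epsilon>) * (real n + 1)\<^sup>2 + \<mu> / 4)
      + (\<Sum>k<N. (d k)\<^sup>2) / (4 * \<mu>)"
    by (simp add: sum.distrib sum_divide_distrib sum_Re algebra_simps)
  also have "\<dots> \<le> real N * (real (n + 1) * real (n + 2) / 2 + 4 * \<epsilon> * (1 + \<epsilon>) * (real n + 1)\<^sup>2 + \<mu> / 4)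
      + real N * (3 / 4 * \<epsilon> * (real n)\<^sup>2)"
  proof -
    have "(\<Sum>k<N. (d k)\<^sup>2) / (4 * \<mu>) \<le> (real n)\<^sup>2 * (real N * (3 * \<epsilon> * (real n + 1))\<^sup>2) / (4 * \<mu>)"
      using sum_d \<open>\<mu> > 0\<close> by (intro divide_right_mono) auto
    also have "\<dots> = real N * (3 / 4 * \<epsilon> * (real n)\<^sup>2)"
      using \<open>\<mu> > 0\<close> by (simp add: \<mu>_def field_simps power2_eq_square)
    finally show ?thesis
      by simp
  qed
  also have "\<dots> \<le> real N * (real (n + 1) * real (n + 2) / 2 + 7 * \<epsilon> * (real n + 1)\<^sup>2)"
  proof -
    have "4 * \<epsilon> * (1 + \<epsilon>) * (real n + 1)\<^sup>2 \<le> 5 * \<epsilon> * (real n + 1)\<^sup>2"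
      using assms by (intro mult_right_mono) auto
    moreover have "3 / 4 * \<epsilon> * (real n)\<^sup>2 \<le> 3 / 4 * \<epsilon> * (real n + 1)\<^sup>2"
      using assms by (intro mult_left_mono power_mono) auto
    moreover have "0 \<le> \<epsilon> * (real n + 1)\<^sup>2"
      using assms by simp
    ultimately have "real (n + 1) * real (n + 2) / 2 + 4 * \<epsilon> * (1 + \<epsilon>) * (real n + 1)\<^sup>2 + \<mu> / 4
        + 3 / 4 * \<epsilon> * (real n)\<^sup>2 \<le> real (n + 1) * real (n + 2) / 2 + 7 * \<epsilon> * (real n + 1)\<^sup>2"
      unfolding \<mu>_def by linarith
    from mult_left_mono[OF this, of "real N"] show ?thesis
      by (simp add: distrib_left)
  qed
  finally show ?thesis
    unfolding x_def .
qed

lemma flat_partial_sums_pair_bound: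
  assumes a: "\<And>j. cmod (a j) = 1" and "m \<le> n"
    and flat_m: "eps_flat \<delta> m a" and flat_n: "eps_flat \<epsilon> n a" and "0 < \<epsilon>" "\<epsilon> \<le> 1/4"
  shows "(\<Sum>j\<le>m. real (n + 1 - j)) * ((1 - \<epsilon>) * sqrt (real n + 1))
       \<le> (1 + \<delta>) * sqrt (real m + 1) * (real (n + 1) * real (n + 2) / 2 + 7 * \<epsilon> * (real n + 1)\<^sup>2)"
proof -
  define N where "N = 2 * n + 1"
  define S where "S k = cesaro_sum a n (unity_root N k)" for k
  define C where "C = (\<Sum>j\<le>m. real (n + 1 - j))"
  define L where "L = (1 - \<epsilon>) * sqrt (real n + 1)"
  define M where "M = (1 + \<delta>) * sqrt (real m + 1)"
  define B where "B = real (n + 1) * real (n + 2) / 2 + 7 * \<epsilon> * (real n + 1)\<^sup>2"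
  have "0 \<le> L"
    using assms by (simp add: L_def)
  have bound_m: "cmod (upoly a m w) \<le> M" and bound_n: "L \<le> cmod (upoly a n w)" if "cmod w = 1" for w
    using eps_flat_on_unit_circle[OF flat_m that] eps_flat_on_unit_circle[OF flat_n that]
    by (simp_all add: L_def M_def)
  then have "0 \<le> M"
    by (meson norm_ge_zero norm_unity_root order_trans)
  have "0 \<le> C"
    by (simp add: C_def sum_nonneg)
  have "(\<Sum>k<N. S k * cnj (upoly a m (unity_root N k))) = of_nat N * of_real C"
    unfolding S_def C_def using assms by (intro sum_cesaro_sum_mult_cnj_upoly) (simp_all add: N_def)
  then have "real N * C = cmod (\<Sum>k<N. S k * cnj (upoly a m (unity_root N k)))"
    by (simp only: norm_mult norm_of_nat norm_of_real abs_of_nonneg[OF \<open>0 \<le> C\<close>])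
  also have "\<dots> \<le> (\<Sum>k<N. cmod (S k) * M)"
    by (rule order_trans[OF norm_sum], rule sum_mono)
      (simp add: norm_mult bound_m mult_left_mono)
  finally have pairing: "real N * C \<le> M * (\<Sum>k<N. cmod (S k))"
    by (simp add: sum_distrib_left mult.commute)
  have "L * (\<Sum>k<N. cmod (S k)) \<le> (\<Sum>k<N. cmod (S k * cnj (upoly a n (unity_root N k))))"
    unfolding sum_distrib_left
    by (rule sum_mono) (simp add: norm_mult bound_n mult_left_mono mult.commute[of L])
  also have "\<dots> \<le> real N * B"
    unfolding S_def B_def N_def using assms by (intro sum_norm_cesaro_sum_mult_cnj_le) auto
  finally have mass: "L * (\<Sum>k<N. cmod (S k)) \<le> real N * B" .
  have "real N * (C * L) \<le> M * (L * (\<Sum>k<N. cmod (S k)))"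
    using mult_right_mono[OF pairing \<open>0 \<le> L\<close>] by (simp add: mult_ac)
  also have "\<dots> \<le> real N * (M * B)"
    using mult_left_mono[OF mass \<open>0 \<le> M\<close>] by (simp add: mult_ac)
  finally show ?thesis
    by (simp add: N_def C_def L_def M_def B_def mult_ac)
qed

lemma pairing_16_25_exceeds_bound:
  fixes K \<delta> \<epsilon> :: real
  assumes K: "1 \<le> K" and \<epsilon>: "0 \<le> \<epsilon>" "\<epsilon> \<le> 1/1000" and \<delta>: "0 \<le> \<delta>" "\<delta> \<le> 1/1000"
  shows "(1 + \<delta>) * 4 * (25 * K * (25 * K + 1) / 2 + 7 * \<epsilon> * (25 * K)\<^sup>2) < (272 * K\<^sup>2 + 8 * K) * ((1 - \<epsilon>) * 5)"
proof -
  have "K \<le> K\<^sup>2"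
    using K by (simp add: power2_eq_square)
  have "7 * \<epsilon> * (25 * K)\<^sup>2 = (4375 * \<epsilon>) * K\<^sup>2"
    by (simp add: power2_eq_square)
  also have "\<dots> \<le> 5 * K\<^sup>2"
    using \<epsilon> by (intro mult_right_mono) auto
  finally have "7 * \<epsilon> * (25 * K)\<^sup>2 \<le> 5 * K\<^sup>2" .
  moreover have "25 * K * (25 * K + 1) / 2 \<le> 325 * K\<^sup>2"
    using \<open>K \<le> K\<^sup>2\<close> by (simp add: power2_eq_square algebra_simps)
  ultimately have "25 * K * (25 * K + 1) / 2 + 7 * \<epsilon> * (25 * K)\<^sup>2 \<le> 330 * K\<^sup>2"
    by linarith
  then have "(1 + \<delta>) * 4 * (25 * K * (25 * K + 1) / 2 + 7 * \<epsilon> * (25 * K)\<^sup>2) \<le> (1 + 1/1000) * 4 * (330 * K\<^sup>2)"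
    using \<delta> K \<epsilon> by (intro mult_mono) auto
  also have "\<dots> < 272 * K\<^sup>2 * ((1 - 1/1000) * 5)"
    using K by simp
  also have "\<dots> \<le> (272 * K\<^sup>2 + 8 * K) * ((1 - \<epsilon>) * 5)"
    using \<epsilon> K by (intro mult_mono) auto
  finally show ?thesis .
qed

lemma not_eps_flat_16_25:
  assumes a: "\<And>j. cmod (a j) = 1" and "0 < K"
    and \<delta>: "0 < \<delta>" "\<delta> \<le> 1/1000" and \<epsilon>: "0 < \<epsilon>" "\<epsilon> \<le> 1/1000"
  shows "\<not> (eps_flat \<delta> (16 * K - 1) a \<and> eps_flat \<epsilon> (25 * K - 1) a)"
proof
  assume flat: "eps_flat \<delta> (16 * K - 1) a \<and> eps_flat \<epsilon> (25 * K - 1) a"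
  define m where "m = 16 * K - 1"
  define n where "n = 25 * K - 1"
  have m1: "real m + 1 = 16 * real K" and n1: "real n + 1 = 25 * real K"
    using \<open>0 < K\<close> by (simp_all add: m_def n_def of_nat_diff)
  have "(\<Sum>j\<le>m. real (n + 1 - j)) = real (m + 1) * real (n + 1) - real m * real (m + 1) / 2"
    by (rule sum_atMost_real_diff) (simp add: m_def n_def)
  also have "\<dots> = 272 * (real K)\<^sup>2 + 8 * real K"
  proof -
    have "real m = 16 * real K - 1" "real (m + 1) = 16 * real K" "real (n + 1) = 25 * real K"
      using m1 n1 by simp_all
    then show ?thesis
      by (simp only:) (simp add: power2_eq_square field_simps)
  qed
  finally have sum_eq: "(\<Sum>j\<le>m. real (n + 1 - j)) = 272 * (real K)\<^sup>2 + 8 * real K" .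
  have sqrt_n: "sqrt (real n + 1) = 5 * sqrt (real K)" and sqrt_m: "sqrt (real m + 1) = 4 * sqrt (real K)"
    unfolding m1 n1 by (simp_all add: real_sqrt_mult)
  have n1': "real (n + 1) = 25 * real K" and n2: "real (n + 2) = 25 * real K + 1"
    using n1 by simp_all
  have "(\<Sum>j\<le>m. real (n + 1 - j)) * ((1 - \<epsilon>) * sqrt (real n + 1))
      \<le> (1 + \<delta>) * sqrt (real m + 1) * (real (n + 1) * real (n + 2) / 2 + 7 * \<epsilon> * (real n + 1)\<^sup>2)"
    using flat a \<epsilon> by (intro flat_partial_sums_pair_bound) (auto simp: m_def n_def)
  from this[unfolded sum_eq sqrt_n sqrt_m n1' n2, unfolded n1]
  have "(272 * (real K)\<^sup>2 + 8 * real K) * ((1 - \<epsilon>) * 5) * sqrt (real K)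
      \<le> (1 + \<delta>) * 4 * (25 * real K * (25 * real K + 1) / 2 + 7 * \<epsilon> * (25 * real K)\<^sup>2) * sqrt (real K)"
    by (simp only: mult_ac)
  then have "(272 * (real K)\<^sup>2 + 8 * real K) * ((1 - \<epsilon>) * 5)
      \<le> (1 + \<delta>) * 4 * (25 * real K * (25 * real K + 1) / 2 + 7 * \<epsilon> * (25 * real K)\<^sup>2)"
    using \<open>0 < K\<close> by (simp only: mult_le_cancel_right) simp
  with pairing_16_25_exceeds_bound[of "real K" \<epsilon> \<delta>] \<open>0 < K\<close> \<delta> \<epsilon> show False
    by simp
qed

theorem theorem2p1:
  fixes a :: "nat \<Rightarrow> complex"
  assumes "\<And>j. cmod (a j) = 1"
  shows "\<not> ultraflat (\<lambda>n. a)"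
proof
  assume "ultraflat (\<lambda>n. a)"
  then obtain \<epsilon> :: "nat \<Rightarrow> real" where pos: "\<And>n. \<epsilon> n > 0" and "\<epsilon> \<longlonglongrightarrow> 0"
    and flat: "\<And>n. eps_flat (\<epsilon> n) n a"
    unfolding ultraflat_def by blast
  then obtain K0 where small: "\<And>n. n \<ge> K0 \<Longrightarrow> \<epsilon> n \<le> 1/1000"
    using order_tendstoD(2)[of \<epsilon> 0 sequentially "1/1000"] unfolding eventually_sequentially
    by (metis less_imp_le zero_less_divide_1_iff zero_less_numeral)
  define K where "K = K0 + 1"
  have "K0 \<le> 16 * K - 1" "K0 \<le> 25 * K - 1"
    by (simp_all add: K_def)
  then show False
    using not_eps_flat_16_25[of a K "\<epsilon> (16 * K - 1)" "\<epsilon> (25 * K - 1)"] assms pos flat small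
    by (simp add: K_def)
qed

end
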